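(* Let $B',B''\subseteq\widetilde\Sigma^*\setminus\mathring\Sigma^+$ be bases in decomposed form, $B'$ with scaffold $sc'$ and fill $fl'$, $B''$ with scaffold $sc''$ and fill $fl''$. If $B'$ and $B''$ are concatenable, then $\mathcal{C}(B')\cdot\mathcal{C}(B'')=\mathcal{C}(B'\odot B'')$, where $B'\odot B''=(sc'\cdot sc'')\cup fl'\cup fl''$.
   Context: $\Sigma$ is a finite alphabet, $\mathring\Sigma=\{\mathring a\mid a\in\Sigma\}$ a disjoint ("dotted") copy, and $\widetilde\Sigma=\Sigma\cup\mathring\Sigma$. The map $dot:\widetilde\Sigma^*\to\mathring\Sigma^*$ replaces each letter $a\in\Sigma$ by $\mathring a$ and leaves dotted letters unchanged. The match operation $@$ on letters is: $a@\mathring a=\mathring a@a=a$, $\mathring a@\mathring a=\mathring a$ for $a\in\Sigma$, undefined otherwise. For words $w,w'\in\widetilde\Sigma^n$, $w@w'=(w(1)@w'(1))\cdots(w(n)@w'(n))$ if every letterwise match is defined ($\epsilon@\epsilon=\epsilon$); otherwise (including unequal lengths) undefined. For languages, $B_1@B_2=\{w_1@w_2\mid w_1\in B_1,w_2\in B_2, w_1@w_2\text{ defined}\}$. Define $B^{0@}=B$, $B^{i@}=B^{(i-1)@}@B$, $B^@=\bigcup_{i\ge0}B^{i@}$, and $\mathcal{C}(B)=B^@\cap\Sigma^*$. $B$ is unproductive if $\mathcal{C}(B)=\emptyset$; $(B_1,B_2)$ is unmatchable if $B_1@B_2=\emptyset$. A base $B\subseteq\widetilde\Sigma^*\setminus\mathring\Sigma^+$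 is in decomposed form with scaffold $sc$ and fill $fl$ if $B$ is the disjoint union of $sc$ and $fl$, $fl$ is unproductive and $(sc,sc)$ is unmatchable. Decomposed bases $B',B''$ (scaffolds $sc',sc''$, fills $fl',fl''$) are concatenable if $B'\odot B''=(sc'\cdot sc'')\cup fl'\cup fl''$ is in decomposed form with scaffold $sc'\cdot sc''$ and fill $fl'\cup fl''$, and for all $w',w''\in\widetilde\Sigma^+$, $y'\in sc'$, $y''\in sc''$: (i) [there exists $x'\in fl'$ with $w'=x'\cdot dot(y'')$ and $x'@y'$ defined] if and only if [$w'\in fl'$ and $w'@(y'y'')$ is defined]; (ii) [there exists $x''\in fl''$ with $w''=dot(y')\cdot x''$ and $x''@y''$ defined] if and only if [$w''\in fl''$ and $w''@(y'y'')$ is defined]. *)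

theory Defs
  imports Main
begin

text \<open>Extended alphabet: letters of Sigma (Plain a) and their dotted copies (Dot a).\<close>
datatype 'a xl = Plain 'a | Dot 'a

type_synonym 'a xword = "'a xl list"

fun dotl :: "'a xl \<Rightarrow> 'a xl" where
  "dotl (Plain a) = Dot a"
| "dotl (Dot a) = Dot a"

definition dot :: "'a xword \<Rightarrow> 'a xword" where
  "dot w = map dotl w"

fun lmatch :: "'a xl \<Rightarrow> 'a xl \<Rightarrow> 'a xl option" where
  "lmatch (Plain a) (Dot b) = (if a = b then Some (Plain a) else None)"
| "lmatch (Dot a) (Plain b) = (if a = b then Some (Plain a) else None)"
| "lmatch (Dot a) (Dot b) = (if a = b then Some (Dot a) else None)"
| "lmatch (Plain a) (Plain b) = None"

fun wmatch :: "'a xword \<Rightarrow> 'a xword \<Rightarrow> 'a xword option" where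
  "wmatch [] [] = Some []"
| "wmatch (x # xs) (y # ys) =
     (case lmatch x y of None \<Rightarrow> None
      | Some z \<Rightarrow> (case wmatch xs ys of None \<Rightarrow> None | Some zs \<Rightarrow> Some (z # zs)))"
| "wmatch (x # xs) [] = None"
| "wmatch [] (y # ys) = None"

definition match_defined :: "'a xword \<Rightarrow> 'a xword \<Rightarrow> bool" where
  "match_defined w w' \<longleftrightarrow> wmatch w w' \<noteq> None"

definition lang_match :: "'a xword set \<Rightarrow> 'a xword set \<Rightarrow> 'a xword set" where
  "lang_match B1 B2 = {w. \<exists>w1\<in>B1. \<exists>w2\<in>B2. wmatch w1 w2 = Some w}"

fun mpow :: "'a xword set \<Rightarrow> nat \<Rightarrow> 'a xword set" where
  "mpow B 0 = B"
| "mpow B (Suc i) = lang_match (mpow B i) B"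

definition mstar :: "'a xword set \<Rightarrow> 'a xword set" where
  "mstar B = (\<Union>i. mpow B i)"

definition plain_words :: "'a xword set" where
  "plain_words = {w. \<forall>x\<in>set w. \<exists>a. x = Plain a}"

definition dotted_plus :: "'a xword set" where
  "dotted_plus = {w. w \<noteq> [] \<and> (\<forall>x\<in>set w. \<exists>a. x = Dot a)}"

definition closure :: "'a xword set \<Rightarrow> 'a xword set" where
  "closure B = mstar B \<inter> plain_words"

definition unproductive :: "'a xword set \<Rightarrow> bool" where
  "unproductive B \<longleftrightarrow> closure B = {}"

definition unmatchable :: "'a xword set \<Rightarrow> 'a xword set \<Rightarrow> bool" where
  "unmatchable B1 B2 \<longleftrightarrow> lang_match B1 B2 = {}"

definition is_base :: "'a xword set \<Rightarrow> bool" where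
  "is_base B \<longleftrightarrow> B \<inter> dotted_plus = {}"

definition lconc :: "'a xword set \<Rightarrow> 'a xword set \<Rightarrow> 'a xword set" where
  "lconc A B = {u @ v | u v. u \<in> A \<and> v \<in> B}"

definition decomposed :: "'a xword set \<Rightarrow> 'a xword set \<Rightarrow> 'a xword set \<Rightarrow> bool" where
  "decomposed B sc fl \<longleftrightarrow> is_base B \<and> B = sc \<union> fl \<and> sc \<inter> fl = {}
      \<and> unproductive fl \<and> unmatchable sc sc"

definition odot :: "'a xword set \<Rightarrow> 'a xword set \<Rightarrow> 'a xword set \<Rightarrow> 'a xword set \<Rightarrow> 'a xword set" where
  "odot sc1 fl1 sc2 fl2 = lconc sc1 sc2 \<union> fl1 \<union> fl2"

definition concatenable ::
  "'a xword set \<Rightarrow> 'a xword set \<Rightarrow> 'a xword set \<Rightarrow> 'a xword set \<Rightarrow> 'a xword set \<Rightarrow> 'a xword set \<Rightarrow> bool" where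
  "concatenable B1 sc1 fl1 B2 sc2 fl2 \<longleftrightarrow>
     decomposed B1 sc1 fl1 \<and> decomposed B2 sc2 fl2 \<and>
     decomposed (odot sc1 fl1 sc2 fl2) (lconc sc1 sc2) (fl1 \<union> fl2) \<and>
     (\<forall>w1 w2 y1 y2. w1 \<noteq> [] \<and> w2 \<noteq> [] \<and> y1 \<in> sc1 \<and> y2 \<in> sc2 \<longrightarrow>
        ((\<exists>x1\<in>fl1. w1 = x1 @ dot y2 \<and> match_defined x1 y1) \<longleftrightarrow>
           (w1 \<in> fl1 \<and> match_defined w1 (y1 @ y2))) \<and>
        ((\<exists>x2\<in>fl2. w2 = dot y1 @ x2 \<and> match_defined x2 y2) \<longleftrightarrow>
           (w2 \<in> fl2 \<and> match_defined w2 (y1 @ y2))))"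

end

theory Submission
  imports Defs "HOL-Library.Multiset"
begin

text \<open>
  Iterated matching does not depend on the order of its arguments: \<open>w\<close> is the match of a
  nonempty family of words iff in every column all of them carry the letter of \<open>w\<close>, at most
  one is undotted, and \<open>w\<close> is undotted exactly when one of them is. For a decomposed base,
  unproductivity of the fill and unmatchability of the scaffold force every family producing an
  undotted word to consist of one scaffold word and fill words matching it. Concatenability says
  that the fill words of \<open>B'\<odot>B''\<close> matching a scaffold word \<open>y'y''\<close> are exactly the fill words
  of \<open>B'\<close> padded by \<open>dot(y'')\<close> and those of \<open>B''\<close> prefixed by \<open>dot(y')\<close>. So families for
  \<open>u\<close> and \<open>v\<close> can be placed side by side, the gaps filled by fully dotted copies of the
  scaffold words, giving a family for \<open>uv\<close>; conversely a family for \<open>w\<close> is cut after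
  \<open>|y'|\<close> letters, where the dotted halves contribute nothing.
\<close>

fun letter :: "'a xl \<Rightarrow> 'a" where
  "letter (Plain a) = a"
| "letter (Dot a) = a"

fun is_plain :: "'a xl \<Rightarrow> bool" where
  "is_plain (Plain a) = True"
| "is_plain (Dot a) = False"

definition xl_of :: "'a \<Rightarrow> bool \<Rightarrow> 'a xl" where
  "xl_of a p = (if p then Plain a else Dot a)"

lemma letter_xl_of [simp]: "letter (xl_of a p) = a"
  and is_plain_xl_of [simp]: "is_plain (xl_of a p) = p"
  by (auto simp: xl_of_def)

lemma xl_eqI: "letter x = letter y \<Longrightarrow> is_plain x = is_plain y \<Longrightarrow> x = y"
  by (cases x; cases y) auto

lemma letter_dotl [simp]: "letter (dotl x) = letter x"
  and is_plain_dotl [simp]: "\<not> is_plain (dotl x)"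
  by (cases x; simp)+

lemma length_dot [simp]: "length (dot y) = length y"
  by (simp add: dot_def)

lemma dot_eq_Nil_iff [simp]: "dot y = [] \<longleftrightarrow> y = []"
  by (simp add: dot_def)

lemma nth_dot [simp]: "i < length y \<Longrightarrow> dot y ! i = dotl (y ! i)"
  by (simp add: dot_def)

lemma lmatch_eq_Some_iff:
  "lmatch x y = Some z \<longleftrightarrow>
     letter x = letter y \<and> \<not> (is_plain x \<and> is_plain y) \<and> z = xl_of (letter x) (is_plain x \<or> is_plain y)"
  by (cases x; cases y) (auto simp: xl_of_def)

lemma wmatch_eq_Some_iff:
  "wmatch u v = Some w \<longleftrightarrow>
     length u = length v \<and> length w = length u \<and> (\<forall>i<length u. lmatch (u ! i) (v ! i) = Some (w ! i))"
proof (induction u v arbitrary: w rule: wmatch.induct)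
  case (2 x xs y ys)
  show ?case
  proof
    assume "wmatch (x # xs) (y # ys) = Some w"
    then obtain z zs where "lmatch x y = Some z" "wmatch xs ys = Some zs" "w = z # zs"
      by (auto split: option.splits)
    then show "length (x # xs) = length (y # ys) \<and> length w = length (x # xs) \<and>
        (\<forall>i<length (x # xs). lmatch ((x # xs) ! i) ((y # ys) ! i) = Some (w ! i))"
      using "2" by (auto simp: nth_Cons split: nat.splits)
  next
    assume h: "length (x # xs) = length (y # ys) \<and> length w = length (x # xs) \<and>
        (\<forall>i<length (x # xs). lmatch ((x # xs) ! i) ((y # ys) ! i) = Some (w ! i))"
    then obtain z zs where w: "w = z # zs"
      by (cases w) auto
    have z: "lmatch x y = Some z"
      using h w by force
    moreover have "wmatch xs ys = Some zs"
      using h w "2"[OF z, of zs] by force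
    ultimately show "wmatch (x # xs) (y # ys) = Some w"
      using w by simp
  qed
qed auto

lemma match_defined_iff:
  "match_defined u v \<longleftrightarrow>
     length u = length v \<and> (\<forall>i<length u. letter (u ! i) = letter (v ! i) \<and> \<not> (is_plain (u ! i) \<and> is_plain (v ! i)))"
proof
  assume "match_defined u v"
  then obtain w where "wmatch u v = Some w"
    by (auto simp: match_defined_def)
  then show "length u = length v \<and>
      (\<forall>i<length u. letter (u ! i) = letter (v ! i) \<and> \<not> (is_plain (u ! i) \<and> is_plain (v ! i)))"
    by (auto simp: wmatch_eq_Some_iff lmatch_eq_Some_iff)
next
  assume h: "length u = length v \<and>
      (\<forall>i<length u. letter (u ! i) = letter (v ! i) \<and> \<not> (is_plain (u ! i) \<and> is_plain (v ! i)))"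
  let ?w = "map (\<lambda>i. xl_of (letter (u ! i)) (is_plain (u ! i) \<or> is_plain (v ! i))) [0..<length u]"
  have "wmatch u v = Some ?w"
    using h by (auto simp: wmatch_eq_Some_iff lmatch_eq_Some_iff)
  then show "match_defined u v"
    by (simp add: match_defined_def)
qed

lemma match_defined_length: "match_defined u v \<Longrightarrow> length u = length v"
  by (simp add: match_defined_iff)

section \<open>Joint matches\<close>

definition column_match :: "'a xl list \<Rightarrow> 'a xl \<Rightarrow> bool" where
  "column_match xs z \<longleftrightarrow>
     (\<forall>x\<in>set xs. letter x = letter z) \<and> length (filter is_plain xs) \<le> 1 \<and>
     (is_plain z \<longleftrightarrow> (\<exists>x\<in>set xs. is_plain x))"

definition joint_match :: "'a xword list \<Rightarrow> 'a xword \<Rightarrow> bool" where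
  "joint_match ws w \<longleftrightarrow>
     ws \<noteq> [] \<and> (\<forall>u\<in>set ws. length u = length w) \<and>
     (\<forall>i<length w. column_match (map (\<lambda>u. u ! i) ws) (w ! i))"

lemma joint_match_length: "joint_match ws w \<Longrightarrow> u \<in> set ws \<Longrightarrow> length u = length w"
  by (simp add: joint_match_def)

lemma joint_match_plainE:
  assumes "joint_match ws w" "i < length w" "is_plain (w ! i)"
  obtains u where "u \<in> set ws" "is_plain (u ! i)"
  using assms by (auto simp: joint_match_def column_match_def)

lemma joint_match_singleton: "joint_match [u] w \<longleftrightarrow> u = w"
proof
  assume h: "joint_match [u] w"
  then have "length u = length w"
    by (simp add: joint_match_def)
  with h show "u = w"
    by (auto intro!: nth_equalityI xl_eqI simp: joint_match_def column_match_def)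
qed (simp add: joint_match_def column_match_def)

lemma joint_match_Cons:
  assumes "ws \<noteq> []"
  shows "joint_match (u # ws) w \<longleftrightarrow> (\<exists>v. joint_match ws v \<and> wmatch v u = Some w)"
proof
  assume h: "joint_match (u # ws) w"
  define v where "v = map (\<lambda>i. xl_of (letter (w ! i)) (\<exists>x\<in>set ws. is_plain (x ! i))) [0..<length w]"
  have col: "column_match (u ! i # map (\<lambda>x. x ! i) ws) (w ! i)" if "i < length w" for i
    using h that by (simp add: joint_match_def)
  have "joint_match ws v"
    unfolding joint_match_def
  proof (intro conjI ballI allI impI)
    fix i assume "i < length v"
    moreover have "length (filter is_plain (map (\<lambda>x. x ! i) ws))
        \<le> length (filter is_plain (u ! i # map (\<lambda>x. x ! i) ws))"
      by simp
    ultimately show "column_match (map (\<lambda>x. x ! i) ws) (v ! i)"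
      using col[of i] by (auto simp: v_def column_match_def)
  qed (use assms h in \<open>auto simp: joint_match_def v_def\<close>)
  moreover have "wmatch v u = Some w"
    unfolding wmatch_eq_Some_iff lmatch_eq_Some_iff
  proof (intro conjI allI impI)
    fix i assume i: "i < length v"
    then have c: "column_match (u ! i # map (\<lambda>x. x ! i) ws) (w ! i)"
      using col by (simp add: v_def)
    show "letter (v ! i) = letter (u ! i)"
      using i c by (simp add: v_def column_match_def)
    show "\<not> (is_plain (v ! i) \<and> is_plain (u ! i))"
      using i c by (auto simp: v_def column_match_def filter_empty_conv)
    show "w ! i = xl_of (letter (v ! i)) (is_plain (v ! i) \<or> is_plain (u ! i))"
      using i c by (intro xl_eqI) (auto simp: v_def column_match_def)
  qed (use h in \<open>auto simp: joint_match_def v_def\<close>)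
  ultimately show "\<exists>v. joint_match ws v \<and> wmatch v u = Some w"
    by blast
next
  assume "\<exists>v. joint_match ws v \<and> wmatch v u = Some w"
  then obtain v where v: "joint_match ws v" and vu: "wmatch v u = Some w"
    by blast
  have len: "length v = length u" "length w = length v"
    and vu_i: "\<And>i. i < length v \<Longrightarrow> letter (v ! i) = letter (u ! i) \<and> \<not> (is_plain (v ! i) \<and> is_plain (u ! i))
        \<and> w ! i = xl_of (letter (v ! i)) (is_plain (v ! i) \<or> is_plain (u ! i))"
    using vu by (auto simp: wmatch_eq_Some_iff lmatch_eq_Some_iff)
  show "joint_match (u # ws) w"
    unfolding joint_match_def
  proof (intro conjI ballI allI impI)
    fix i assume i: "i < length w"
    have c: "column_match (map (\<lambda>x. x ! i) ws) (v ! i)"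
      using v i len by (simp add: joint_match_def)
    have "is_plain (u ! i) \<Longrightarrow> filter is_plain (map (\<lambda>x. x ! i) ws) = []"
      using c vu_i[of i] i len by (auto simp: column_match_def filter_empty_conv)
    then show "column_match (map (\<lambda>x. x ! i) (u # ws)) (w ! i)"
      using c vu_i[of i] i len by (auto simp: column_match_def)
  qed (use v len in \<open>auto simp: joint_match_def\<close>)
qed

lemma mpow_eq: "mpow B n = {w. \<exists>ws. length ws = Suc n \<and> set ws \<subseteq> B \<and> joint_match ws w}"
proof (induction n)
  case 0
  show ?case
    by (auto simp: length_Suc_conv joint_match_singleton)
next
  case (Suc n)
  have Cons: "joint_match (u # ws) w \<longleftrightarrow> (\<exists>v. joint_match ws v \<and> wmatch v u = Some w)"
    if "length ws = Suc n" for u ws w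
    using that by (intro joint_match_Cons) auto
  show ?case
  proof (intro set_eqI iffI)
    fix w assume "w \<in> mpow B (Suc n)"
    then obtain u v ws where "u \<in> B" "length ws = Suc n" "set ws \<subseteq> B" "joint_match ws v" "wmatch v u = Some w"
      by (auto simp: lang_match_def Suc)
    with Cons show "w \<in> {w. \<exists>ws. length ws = Suc (Suc n) \<and> set ws \<subseteq> B \<and> joint_match ws w}"
      by (intro CollectI exI[of _ "u # ws"]) auto
  next
    fix w assume "w \<in> {w. \<exists>ws. length ws = Suc (Suc n) \<and> set ws \<subseteq> B \<and> joint_match ws w}"
    then obtain ws' where ws': "length ws' = Suc (Suc n)" "set ws' \<subseteq> B" "joint_match ws' w"
      by blast
    then obtain u ws where u: "ws' = u # ws"
      by (cases ws') auto
    then have "length ws = Suc n" "u \<in> B" "set ws \<subseteq> B"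
      using ws' by auto
    moreover obtain v where "joint_match ws v" "wmatch v u = Some w"
      using Cons[OF \<open>length ws = Suc n\<close>] ws'(3) u by blast
    ultimately show "w \<in> mpow B (Suc n)"
      unfolding mpow.simps lang_match_def Suc by blast
  qed
qed

lemma closure_iff: "w \<in> closure B \<longleftrightarrow> (\<exists>ws. set ws \<subseteq> B \<and> joint_match ws w) \<and> w \<in> plain_words"
proof -
  have "(\<exists>n ws. length ws = Suc n \<and> set ws \<subseteq> B \<and> joint_match ws w) \<longleftrightarrow>
      (\<exists>ws. set ws \<subseteq> B \<and> joint_match ws w)"
    by (metis joint_match_def length_greater_0_conv Suc_pred)
  then show ?thesis
    by (simp add: closure_def mstar_def mpow_eq)
qed

lemma column_match_subset_mset:
  assumes "mset xs \<subseteq># mset ys" "column_match ys z" "is_plain z \<Longrightarrow> \<exists>x\<in>set xs. is_plain x"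
  shows "column_match xs z"
proof -
  have "set xs \<subseteq> set ys"
    using assms(1) by (metis set_mset_mono set_mset_mset)
  moreover have "length (filter is_plain xs) \<le> length (filter is_plain ys)"
    using size_mset_mono[OF multiset_filter_mono[OF assms(1), of is_plain]]
    by (simp flip: mset_filter)
  ultimately show ?thesis
    using assms by (auto simp: column_match_def)
qed

lemma joint_match_subset_mset:
  assumes "mset ws' \<subseteq># mset ws" "ws' \<noteq> []" "joint_match ws w"
    and "\<And>i. i < length w \<Longrightarrow> is_plain (w ! i) \<Longrightarrow> \<exists>u\<in>set ws'. is_plain (u ! i)"
  shows "joint_match ws' w"
  unfolding joint_match_def
proof (intro conjI ballI allI impI)
  have "set ws' \<subseteq> set ws"
    using assms(1) by (metis set_mset_mono set_mset_mset)
  then show "length u = length w" if "u \<in> set ws'" for u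
    using that assms(3) by (auto simp: joint_match_def)
  fix i assume i: "i < length w"
  have "mset (map (\<lambda>u. u ! i) ws') \<subseteq># mset (map (\<lambda>u. u ! i) ws)"
    using image_mset_subseteq_mono[OF assms(1)] by simp
  then show "column_match (map (\<lambda>u. u ! i) ws') (w ! i)"
    by (rule column_match_subset_mset) (use assms(3,4) i in \<open>auto simp: joint_match_def\<close>)
qed fact

lemma joint_match_mset_eq:
  assumes "mset ws' = mset ws" "joint_match ws w"
  shows "joint_match ws' w"
proof (rule joint_match_subset_mset[OF _ _ assms(2)])
  have "set ws' = set ws"
    using assms(1) by (metis set_mset_mset)
  then show "ws' \<noteq> []"
    using assms(2) by (auto simp: joint_match_def)
  show "\<And>i. i < length w \<Longrightarrow> is_plain (w ! i) \<Longrightarrow> \<exists>u\<in>set ws'. is_plain (u ! i)"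
    using joint_match_plainE[OF assms(2)] \<open>set ws' = set ws\<close> by metis
qed (use assms(1) in simp)

lemma joint_match_append_dot:
  assumes "joint_match ws w" "y \<in> set ws"
  shows "joint_match (ws @ replicate k (dot y)) w"
  using assms
  by (auto simp: joint_match_def column_match_def filter_empty_conv)

lemma joint_match_drop_dotted:
  assumes "joint_match (ws @ ds) w" "ws \<noteq> []" "set ds \<subseteq> range dot"
  shows "joint_match ws w"
proof (rule joint_match_subset_mset[OF _ assms(2,1)])
  fix i assume i: "i < length w" and "is_plain (w ! i)"
  then obtain u where u: "u \<in> set (ws @ ds)" "is_plain (u ! i)"
    using joint_match_plainE[OF assms(1)] by metis
  have "u \<notin> set ds"
  proof
    assume "u \<in> set ds"
    then obtain y where "u = dot y"
      using assms(3) by blast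
    moreover have "i < length u"
      using joint_match_length[OF assms(1) u(1)] i by simp
    ultimately show False
      using u(2) by simp
  qed
  then show "\<exists>u\<in>set ws. is_plain (u ! i)"
    using u by auto
qed simp

lemma joint_match_match_defined:
  assumes "joint_match (y # ws) w" "x \<in> set ws"
  shows "match_defined x y"
  unfolding match_defined_iff
proof (intro conjI allI impI)
  show len: "length x = length y"
    using assms by (simp add: joint_match_def)
  fix i assume "i < length x"
  then have c: "column_match (y ! i # map (\<lambda>u. u ! i) ws) (w ! i)"
    using assms len by (simp add: joint_match_def)
  then show "letter (x ! i) = letter (y ! i)"
    using assms(2) by (simp add: column_match_def)
  have "filter is_plain (map (\<lambda>u. u ! i) ws) \<noteq> [] \<Longrightarrow> \<not> is_plain (y ! i)"
    using c by (auto simp: column_match_def simp flip: length_greater_0_conv)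
  then show "\<not> (is_plain (x ! i) \<and> is_plain (y ! i))"
    using assms(2) by (auto simp: filter_empty_conv)
qed

lemma joint_match_take: "joint_match ws w \<Longrightarrow> joint_match (map (take n) ws) (take n w)"
  by (auto simp: joint_match_def comp_def)

lemma joint_match_drop:
  assumes "joint_match ws w"
  shows "joint_match (map (drop n) ws) (drop n w)"
proof -
  have "column_match (map (\<lambda>u. drop n u ! i) ws) (drop n w ! i)" if i: "i < length w - n" for i
  proof -
    have "map (\<lambda>u. drop n u ! i) ws = map (\<lambda>u. u ! (n + i)) ws"
      using assms i by (auto simp: joint_match_def)
    moreover have "column_match (map (\<lambda>u. u ! (n + i)) ws) (w ! (n + i))"
      using assms i by (simp add: joint_match_def)
    moreover have "drop n w ! i = w ! (n + i)"
      using i by simp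
    ultimately show ?thesis
      by (simp only:)
  qed
  then show ?thesis
    using assms by (auto simp: joint_match_def comp_def)
qed

lemma joint_match_append:
  assumes "joint_match G u" "joint_match H v" "length G = length H"
  shows "joint_match (map2 (@) G H) (u @ v)"
  unfolding joint_match_def
proof (intro conjI ballI allI impI)
  show "map2 (@) G H \<noteq> []"
    using assms by (auto simp: joint_match_def)
  show "length x = length (u @ v)" if "x \<in> set (map2 (@) G H)" for x
    using that assms(1,2) by (auto simp: joint_match_def elim!: in_set_zipE)
  fix i assume i: "i < length (u @ v)"
  have lens: "length g = length u" "length h = length v" if "(g, h) \<in> set (zip G H)" for g h
    using that assms(1,2) by (auto simp: joint_match_def elim!: in_set_zipE)
  show "column_match (map (\<lambda>x. x ! i) (map2 (@) G H)) ((u @ v) ! i)"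
  proof (cases "i < length u")
    case True
    have "map (\<lambda>x. x ! i) (map2 (@) G H) = map (\<lambda>(g, h). g ! i) (zip G H)"
      using True lens by (auto simp: nth_append)
    also have "\<dots> = map (\<lambda>g. g ! i) G"
      using assms(3) by (induction G H rule: list_induct2) auto
    finally show ?thesis
      using assms(1) True by (simp add: joint_match_def nth_append)
  next
    case False
    have "map (\<lambda>x. x ! i) (map2 (@) G H) = map (\<lambda>(g, h). h ! (i - length u)) (zip G H)"
      using False lens by (auto simp: nth_append)
    also have "\<dots> = map (\<lambda>h. h ! (i - length u)) H"
      using assms(3) by (induction G H rule: list_induct2) auto
    finally show ?thesis
      using assms(2) False i by (simp add: joint_match_def nth_append)
  qed
qed

section \<open>Splicing and cutting matching families\<close>

lemma joint_match_append_padded: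
  assumes u: "joint_match (y1 # R1) u" and v: "joint_match (y2 # R2) v"
  shows "joint_match ((y1 @ y2) # map (\<lambda>x. x @ dot y2) R1 @ map (\<lambda>x. dot y1 @ x) R2) (u @ v)"
proof -
  let ?G = "y1 # R1 @ replicate (length R2) (dot y1)"
  let ?H = "y2 # replicate (length R1) (dot y2) @ R2"
  have G: "joint_match ?G u"
    using joint_match_append_dot[OF u] by simp
  have "joint_match ((y2 # R2) @ replicate (length R1) (dot y2)) v"
    using joint_match_append_dot[OF v] by simp
  then have H: "joint_match ?H v"
    by (rule joint_match_mset_eq[rotated]) simp
  have "map2 (@) ?G ?H = (y1 @ y2) # map (\<lambda>x. x @ dot y2) R1 @ map (\<lambda>x. dot y1 @ x) R2"
    by (simp add: zip_append zip_replicate1 zip_replicate2)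
  then show ?thesis
    using joint_match_append[OF G H] by simp
qed

lemma joint_match_split:
  assumes w: "joint_match ((y1 @ y2) # A1 @ A2) w"
    and A1: "\<forall>x\<in>set A1. drop (length y1) x = dot y2"
    and A2: "\<forall>x\<in>set A2. take (length y1) x = dot y1"
  shows "joint_match (y1 # map (take (length y1)) A1) (take (length y1) w)"
    and "joint_match (y2 # map (drop (length y1)) A2) (drop (length y1) w)"
proof -
  let ?n = "length y1"
  have "joint_match ((y1 # map (take ?n) A1) @ map (take ?n) A2) (take ?n w)"
    using joint_match_take[OF w, of ?n] by simp
  moreover have "set (map (take ?n) A2) \<subseteq> range dot"
    using A2 by auto
  ultimately show "joint_match (y1 # map (take ?n) A1) (take ?n w)"
    by (meson joint_match_drop_dotted list.discI)
  have "joint_match (map (drop ?n) ((y1 @ y2) # A1 @ A2)) (drop ?n w)"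
    using joint_match_drop[OF w] .
  then have "joint_match ((y2 # map (drop ?n) A2) @ map (drop ?n) A1) (drop ?n w)"
    by (rule joint_match_mset_eq[rotated]) simp
  moreover have "set (map (drop ?n) A1) \<subseteq> range dot"
    using A1 by auto
  ultimately show "joint_match (y2 # map (drop ?n) A2) (drop ?n w)"
    by (meson joint_match_drop_dotted list.discI)
qed

section \<open>Decomposed bases\<close>

lemma unmatchable_Nil_notin: "unmatchable sc sc \<Longrightarrow> [] \<notin> sc"
  by (force simp: unmatchable_def lang_match_def)

lemma joint_match_scaffold:
  assumes "unproductive fl" "unmatchable sc sc"
    and "set ws \<subseteq> sc \<union> fl" "joint_match ws w" "w \<in> plain_words"
  obtains y R where "y \<in> sc" "set R \<subseteq> fl" "joint_match (y # R) w"
proof -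
  have "w \<notin> closure fl"
    using assms(1) by (simp add: unproductive_def)
  with assms(4,5) have "\<not> set ws \<subseteq> fl"
    by (auto simp: closure_iff)
  then obtain y where y: "y \<in> set ws" "y \<notin> fl"
    by blast
  then have "y \<in> sc"
    using assms(3) by blast
  obtain a b where ws: "ws = a @ y # b"
    using split_list[OF y(1)] by blast
  have yR: "joint_match (y # a @ b) w"
    by (rule joint_match_mset_eq[OF _ assms(4)]) (simp add: ws)
  have "x \<in> fl" if x: "x \<in> set (a @ b)" for x
  proof (rule ccontr)
    assume "x \<notin> fl"
    then have "x \<in> sc"
      using x assms(3) ws by auto
    moreover obtain z where "wmatch x y = Some z"
      using joint_match_match_defined[OF yR x] by (auto simp: match_defined_def)
    ultimately have "z \<in> lang_match sc sc"
      using \<open>y \<in> sc\<close> by (auto simp: lang_match_def)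
    then show False
      using assms(2) by (simp add: unmatchable_def)
  qed
  then show thesis
    using that \<open>y \<in> sc\<close> yR by blast
qed

lemma closure_decomposedE:
  assumes "decomposed B sc fl" "w \<in> closure B"
  obtains y R where "y \<in> sc" "set R \<subseteq> fl" "joint_match (y # R) w"
proof -
  obtain ws where "set ws \<subseteq> sc \<union> fl" "joint_match ws w" "w \<in> plain_words"
    using assms by (auto simp: closure_iff decomposed_def)
  then show thesis
    using assms(1) that by (auto simp: decomposed_def elim!: joint_match_scaffold)
qed

section \<open>Concatenable bases\<close>

lemma concatenable_fill1_iff:
  assumes "concatenable B1 sc1 fl1 B2 sc2 fl2" "y1 \<in> sc1" "y2 \<in> sc2" "w \<noteq> []"
  shows "(\<exists>x\<in>fl1. w = x @ dot y2 \<and> match_defined x y1) \<longleftrightarrow> w \<in> fl1 \<and> match_defined w (y1 @ y2)"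
  using assms unfolding concatenable_def
  by (elim conjE allE[of _ w] allE[of _ w] allE[of _ y1] allE[of _ y2]) simp

lemma concatenable_fill2_iff:
  assumes "concatenable B1 sc1 fl1 B2 sc2 fl2" "y1 \<in> sc1" "y2 \<in> sc2" "w \<noteq> []"
  shows "(\<exists>x\<in>fl2. w = dot y1 @ x \<and> match_defined x y2) \<longleftrightarrow> w \<in> fl2 \<and> match_defined w (y1 @ y2)"
  using assms unfolding concatenable_def
  by (elim conjE allE[of _ w] allE[of _ w] allE[of _ y1] allE[of _ y2]) simp

lemma concatenable_scaffold_nonempty:
  assumes "concatenable B1 sc1 fl1 B2 sc2 fl2"
  shows "y1 \<in> sc1 \<Longrightarrow> y1 \<noteq> []" and "y2 \<in> sc2 \<Longrightarrow> y2 \<noteq> []"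
proof -
  have "unmatchable sc1 sc1" "unmatchable sc2 sc2"
    using assms by (simp_all add: concatenable_def decomposed_def)
  then show "y1 \<in> sc1 \<Longrightarrow> y1 \<noteq> []" "y2 \<in> sc2 \<Longrightarrow> y2 \<noteq> []"
    using unmatchable_Nil_notin by blast+
qed

lemma concatenable_fill1_pad:
  assumes c: "concatenable B1 sc1 fl1 B2 sc2 fl2" and "y1 \<in> sc1" "y2 \<in> sc2"
    and "x \<in> fl1" "match_defined x y1"
  shows "x @ dot y2 \<in> fl1"
proof -
  have "x @ dot y2 \<noteq> []"
    using concatenable_scaffold_nonempty(2)[OF c \<open>y2 \<in> sc2\<close>] by simp
  then show ?thesis
    using concatenable_fill1_iff[OF assms(1-3)] assms(4,5) by blast
qed

lemma concatenable_fill2_pad: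
  assumes c: "concatenable B1 sc1 fl1 B2 sc2 fl2" and "y1 \<in> sc1" "y2 \<in> sc2"
    and "x \<in> fl2" "match_defined x y2"
  shows "dot y1 @ x \<in> fl2"
proof -
  have "dot y1 @ x \<noteq> []"
    using concatenable_scaffold_nonempty(1)[OF c \<open>y1 \<in> sc1\<close>] by simp
  then show ?thesis
    using concatenable_fill2_iff[OF assms(1-3)] assms(4,5) by blast
qed

lemma concatenable_fill1_cut:
  assumes c: "concatenable B1 sc1 fl1 B2 sc2 fl2" and "y1 \<in> sc1" "y2 \<in> sc2"
    and "x \<in> fl1" "match_defined x (y1 @ y2)"
  shows "take (length y1) x \<in> fl1" and "drop (length y1) x = dot y2"
proof -
  have "x \<noteq> []"
    using concatenable_scaffold_nonempty(1)[OF c \<open>y1 \<in> sc1\<close>] match_defined_length[OF assms(5)]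
    by auto
  then obtain x1 where "x1 \<in> fl1" "x = x1 @ dot y2" "match_defined x1 y1"
    using concatenable_fill1_iff[OF assms(1-3)] assms(4,5) by blast
  then show "take (length y1) x \<in> fl1" "drop (length y1) x = dot y2"
    using match_defined_length[of x1 y1, symmetric] by simp_all
qed

lemma concatenable_fill2_cut:
  assumes c: "concatenable B1 sc1 fl1 B2 sc2 fl2" and "y1 \<in> sc1" "y2 \<in> sc2"
    and "x \<in> fl2" "match_defined x (y1 @ y2)"
  shows "take (length y1) x = dot y1" and "drop (length y1) x \<in> fl2"
proof -
  have "x \<noteq> []"
    using concatenable_scaffold_nonempty(1)[OF c \<open>y1 \<in> sc1\<close>] match_defined_length[OF assms(5)]
    by auto
  then obtain x2 where "x2 \<in> fl2" "x = dot y1 @ x2"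
    using concatenable_fill2_iff[OF assms(1-3)] assms(4,5) by blast
  then show "take (length y1) x = dot y1" "drop (length y1) x \<in> fl2"
    by auto
qed

lemma append_mem_closure_odot:
  assumes c: "concatenable B1 sc1 fl1 B2 sc2 fl2"
    and u: "u \<in> closure B1" and v: "v \<in> closure B2"
  shows "u @ v \<in> closure (odot sc1 fl1 sc2 fl2)"
proof -
  have "decomposed B1 sc1 fl1" "decomposed B2 sc2 fl2"
    using c by (simp_all add: concatenable_def)
  obtain y1 R1 where y1: "y1 \<in> sc1" "set R1 \<subseteq> fl1" "joint_match (y1 # R1) u"
    using \<open>decomposed B1 sc1 fl1\<close> u by (rule closure_decomposedE)
  obtain y2 R2 where y2: "y2 \<in> sc2" "set R2 \<subseteq> fl2" "joint_match (y2 # R2) v"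
    using \<open>decomposed B2 sc2 fl2\<close> v by (rule closure_decomposedE)
  let ?ws = "(y1 @ y2) # map (\<lambda>x. x @ dot y2) R1 @ map (\<lambda>x. dot y1 @ x) R2"
  have "set ?ws \<subseteq> odot sc1 fl1 sc2 fl2"
  proof -
    have "y1 @ y2 \<in> lconc sc1 sc2"
      using y1 y2 by (auto simp: lconc_def)
    moreover have "x @ dot y2 \<in> fl1" if "x \<in> set R1" for x
      using concatenable_fill1_pad[OF c y1(1) y2(1)] joint_match_match_defined[OF y1(3)] that y1(2)
      by blast
    moreover have "dot y1 @ x \<in> fl2" if "x \<in> set R2" for x
      using concatenable_fill2_pad[OF c y1(1) y2(1)] joint_match_match_defined[OF y2(3)] that y2(2)
      by blast
    ultimately show ?thesis
      by (auto simp: odot_def)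
  qed
  moreover have "joint_match ?ws (u @ v)"
    using y1(3) y2(3) by (rule joint_match_append_padded)
  moreover have "u @ v \<in> plain_words"
    using u v by (auto simp: closure_def plain_words_def)
  ultimately show ?thesis
    unfolding closure_iff by blast
qed

lemma closure_odot_split:
  assumes c: "concatenable B1 sc1 fl1 B2 sc2 fl2"
    and w: "w \<in> closure (odot sc1 fl1 sc2 fl2)"
  shows "w \<in> lconc (closure B1) (closure B2)"
proof -
  have B1: "B1 = sc1 \<union> fl1" and B2: "B2 = sc2 \<union> fl2"
    using c by (simp_all add: concatenable_def decomposed_def)
  have "decomposed (odot sc1 fl1 sc2 fl2) (lconc sc1 sc2) (fl1 \<union> fl2)"
    using c by (simp add: concatenable_def)
  then obtain y R where "y \<in> lconc sc1 sc2" and R: "set R \<subseteq> fl1 \<union> fl2" and yR: "joint_match (y # R) w"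
    using w by (rule closure_decomposedE)
  then obtain y1 y2 where y: "y = y1 @ y2" "y1 \<in> sc1" "y2 \<in> sc2"
    by (auto simp: lconc_def)
  let ?n = "length y1"
  define A1 where "A1 = filter (\<lambda>x. x \<in> fl1) R"
  define A2 where "A2 = filter (\<lambda>x. x \<notin> fl1) R"
  have md: "match_defined x (y1 @ y2)" if "x \<in> set R" for x
    using joint_match_match_defined[OF yR that] y(1) by simp
  have "joint_match ((y1 @ y2) # A1 @ A2) w"
    by (rule joint_match_mset_eq[OF _ yR]) (simp add: A1_def A2_def y(1) flip: multiset_partition)
  moreover have "\<forall>x\<in>set A1. drop ?n x = dot y2"
    using concatenable_fill1_cut(2)[OF c y(2,3)] md by (auto simp: A1_def)
  moreover have "\<forall>x\<in>set A2. take ?n x = dot y1"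
    using concatenable_fill2_cut(1)[OF c y(2,3)] md R by (auto simp: A2_def)
  ultimately have u: "joint_match (y1 # map (take ?n) A1) (take ?n w)"
    and v: "joint_match (y2 # map (drop ?n) A2) (drop ?n w)"
    by (rule joint_match_split)+
  have "take ?n w \<in> plain_words" "drop ?n w \<in> plain_words"
    using w by (auto simp: closure_def plain_words_def dest: in_set_takeD in_set_dropD)
  moreover have "set (y1 # map (take ?n) A1) \<subseteq> B1"
    using concatenable_fill1_cut(1)[OF c y(2,3)] md y(2) by (auto simp: A1_def B1)
  moreover have "set (y2 # map (drop ?n) A2) \<subseteq> B2"
    using concatenable_fill2_cut(2)[OF c y(2,3)] md y(3) R by (auto simp: A2_def B2)
  ultimately have "take ?n w \<in> closure B1" "drop ?n w \<in> closure B2"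
    using u v unfolding closure_iff by blast+
  moreover have "w = take ?n w @ drop ?n w"
    by simp
  ultimately show ?thesis
    unfolding lconc_def by blast
qed

theorem theorem2:
  fixes B1 B2 sc1 fl1 sc2 fl2 :: "('a::finite) xword set"
  assumes "decomposed B1 sc1 fl1"
    and "decomposed B2 sc2 fl2"
    and "concatenable B1 sc1 fl1 B2 sc2 fl2"
  shows "lconc (closure B1) (closure B2) = closure (odot sc1 fl1 sc2 fl2)"
proof
  \<comment> \<open>The first two hypotheses are already part of concatenability.\<close>
  show "lconc (closure B1) (closure B2) \<subseteq> closure (odot sc1 fl1 sc2 fl2)"
    using append_mem_closure_odot[OF assms(3)] by (auto simp: lconc_def)
  show "closure (odot sc1 fl1 sc2 fl2) \<subseteq> lconc (closure B1) (closure B2)"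
    using closure_odot_split[OF assms(3)] by blast
qed

end
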